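(* Let $\mathbf{L}\in Q^2(\mathbb{D}^2)$. An analytic function $F\colon\mathbb{D}^2\to\mathbb{C}$ has bounded $\mathbf{L}$-index in joint variables if and only if for any $R'=(r_1',r_2')$, $R''=(r_1'',r_2'')$ with $0<r_j'<r_j''\le\beta$ ($j=1,2$) there exists $p_1=p_1(R',R'')\ge1$ such that for each $z^0\in\mathbb{D}^2$ $$M\Big(\frac{R''}{\mathbf{L}(z^0)},z^0,F\Big)\le p_1\,M\Big(\frac{R'}{\mathbf{L}(z^0)},z^0,F\Big).$$
   Context: $\mathbb{D}^2=\{(z_1,z_2)\in\mathbb{C}^2:|z_1|<1,|z_2|<1\}$, $\mathbb{Z}_+=\{0,1,2,\dots\}$, $\mathbb{R}_+=[0,\infty)$. A constant $\beta>1$ is fixed. $\mathbf{L}(z)=(l_1(z),l_2(z))$, where each $l_j\colon\mathbb{D}^2\to\mathbb{R}_+$ is continuous and satisfies $l_j(z_1,z_2)>\beta/(1-|z_j|)$ for all $(z_1,z_2)\in\mathbb{D}^2$, $j=1,2$. For $z^0\in\mathbb{C}^2$ and $R=(r_1,r_2)\in\mathbb{R}_+^2$: $\mathbb{D}^2[z^0,R]=\{z:|z_j-z_j^0|\le r_j,\ j=1,2\}$, $\mathbb{T}^2(z^0,R)=\{z:|z_j-z_j^0|=r_j,\ j=1,2\}$, $\frac{R}{\mathbf{L}(z^0)}=\big(\frac{r_1}{l_1(z^0)},\frac{r_2}{l_2(z^0)}\big)$, and $M(R,z^0,F)=\max\{|F(z)|: z\in\mathbb{T}^2(z^0,R)\}$.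 $F^{(p,q)}=\frac{\partial^{p+q}F}{\partial z_1^p\partial z_2^q}$. An analytic $F\colon\mathbb{D}^2\to\mathbb{C}$ has bounded $\mathbf{L}$-index in joint variables if there is $n_0\in\mathbb{Z}_+$ such that for all $z\in\mathbb{D}^2$ and all $(p_1,p_2)\in\mathbb{Z}_+^2$: $\frac{|F^{(p_1,p_2)}(z)|}{p_1!p_2!\,l_1^{p_1}(z)l_2^{p_2}(z)}\le\max\{\frac{|F^{(k_1,k_2)}(z)|}{k_1!k_2!\,l_1^{k_1}(z)l_2^{k_2}(z)}:0\le k_1+k_2\le n_0\}$. $Q^2(\mathbb{D}^2)$ is the class of such $\mathbf{L}$ for which, for all $R=(r_1,r_2)\in[0,\beta]^2$ and $j=1,2$, $0<\lambda_{1,j}(R)\le\lambda_{2,j}(R)<\infty$, where $\lambda_{1,j}(R)=\inf_{z^0\in\mathbb{D}^2}\inf\{l_j(z)/l_j(z^0): z\in\mathbb{D}^2[z^0,R/\mathbf{L}(z^0)]\}$ and $\lambda_{2,j}(R)=\sup_{z^0\in\mathbb{D}^2}\sup\{l_j(z)/l_j(z^0): z\in\mathbb{D}^2[z^0,R/\mathbf{L}(z^0)]\}$. *)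

theory Defs
  imports "HOL-Complex_Analysis.Complex_Analysis"
begin

definition bidisc :: "(complex \<times> complex) set" where
  "bidisc = {z. cmod (fst z) < 1 \<and> cmod (snd z) < 1}"

definition cpolydisc :: "complex \<times> complex \<Rightarrow> real \<times> real \<Rightarrow> (complex \<times> complex) set" where
  "cpolydisc z0 R = {z. cmod (fst z - fst z0) \<le> fst R \<and> cmod (snd z - snd z0) \<le> snd R}"

definition torus2 :: "complex \<times> complex \<Rightarrow> real \<times> real \<Rightarrow> (complex \<times> complex) set" where
  "torus2 z0 R = {z. cmod (fst z - fst z0) = fst R \<and> cmod (snd z - snd z0) = snd R}"

definition divL :: "real \<times> real \<Rightarrow> (complex \<times> complex \<Rightarrow> real) \<Rightarrow> (complex \<times> complex \<Rightarrow> real)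
    \<Rightarrow> complex \<times> complex \<Rightarrow> real \<times> real" where
  "divL R l1 l2 z0 = (fst R / l1 z0, snd R / l2 z0)"

text \<open>Maximum modulus on the skeleton (the maximum exists for continuous F; written as Sup).\<close>
definition maxmod :: "real \<times> real \<Rightarrow> complex \<times> complex \<Rightarrow> (complex \<times> complex \<Rightarrow> complex) \<Rightarrow> real" where
  "maxmod R z0 F = (SUP z \<in> torus2 z0 R. cmod (F z))"

text \<open>Analyticity in D^2: continuous and holomorphic in each variable separately
  (equivalent to joint holomorphy by Osgood's lemma).\<close>
definition analytic2 :: "(complex \<times> complex \<Rightarrow> complex) \<Rightarrow> bool" where
  "analytic2 F \<longleftrightarrow> continuous_on bidisc F \<and>
     (\<forall>z \<in> bidisc. (\<lambda>w. F (w, snd z)) field_differentiable at (fst z)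
                  \<and> (\<lambda>w. F (fst z, w)) field_differentiable at (snd z))"

definition pd1 :: "(complex \<times> complex \<Rightarrow> complex) \<Rightarrow> complex \<times> complex \<Rightarrow> complex" where
  "pd1 G z = deriv (\<lambda>w. G (w, snd z)) (fst z)"

definition pd2 :: "(complex \<times> complex \<Rightarrow> complex) \<Rightarrow> complex \<times> complex \<Rightarrow> complex" where
  "pd2 G z = deriv (\<lambda>w. G (fst z, w)) (snd z)"

definition pderiv2 :: "(complex \<times> complex \<Rightarrow> complex) \<Rightarrow> nat \<Rightarrow> nat \<Rightarrow> complex \<times> complex \<Rightarrow> complex" where
  "pderiv2 F p q = (pd1 ^^ p) ((pd2 ^^ q) F)"

definition nterm :: "(complex \<times> complex \<Rightarrow> complex) \<Rightarrow> (complex \<times> complex \<Rightarrow> real)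
    \<Rightarrow> (complex \<times> complex \<Rightarrow> real) \<Rightarrow> complex \<times> complex \<Rightarrow> nat \<times> nat \<Rightarrow> real" where
  "nterm F l1 l2 z k = cmod (pderiv2 F (fst k) (snd k) z) /
       (fact (fst k) * fact (snd k) * l1 z ^ fst k * l2 z ^ snd k)"

definition bounded_L_index :: "(complex \<times> complex \<Rightarrow> complex) \<Rightarrow> (complex \<times> complex \<Rightarrow> real)
    \<Rightarrow> (complex \<times> complex \<Rightarrow> real) \<Rightarrow> bool" where
  "bounded_L_index F l1 l2 \<longleftrightarrow>
     (\<exists>n0::nat. \<forall>z \<in> bidisc. \<forall>p1 p2.
        nterm F l1 l2 z (p1, p2) \<le> Max (nterm F l1 l2 z ` {k. fst k + snd k \<le> n0}))"

definition admissible_L :: "real \<Rightarrow> (complex \<times> complex \<Rightarrow> real) \<Rightarrow> (complex \<times> complex \<Rightarrow> real) \<Rightarrow> bool" where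
  "admissible_L \<beta> l1 l2 \<longleftrightarrow>
     continuous_on bidisc l1 \<and> continuous_on bidisc l2 \<and>
     (\<forall>z \<in> bidisc. l1 z \<ge> 0 \<and> l2 z \<ge> 0 \<and>
        l1 z > \<beta> / (1 - cmod (fst z)) \<and> l2 z > \<beta> / (1 - cmod (snd z)))"

text \<open>Ratio set whose inf is lambda_{1,j}(R) and sup is lambda_{2,j}(R).\<close>
definition ratios :: "real \<Rightarrow> (complex \<times> complex \<Rightarrow> real) \<Rightarrow> (complex \<times> complex \<Rightarrow> real)
    \<Rightarrow> (complex \<times> complex \<Rightarrow> real) \<Rightarrow> real \<times> real \<Rightarrow> real set" where
  "ratios \<beta> l1 l2 lj R = {lj z / lj z0 | z z0. z0 \<in> bidisc \<and> z \<in> bidisc \<and>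
        z \<in> cpolydisc z0 (divL R l1 l2 z0)}"

definition Q2 :: "real \<Rightarrow> (complex \<times> complex \<Rightarrow> real) \<Rightarrow> (complex \<times> complex \<Rightarrow> real) \<Rightarrow> bool" where
  "Q2 \<beta> l1 l2 \<longleftrightarrow> admissible_L \<beta> l1 l2 \<and>
     (\<forall>R. 0 \<le> fst R \<and> fst R \<le> \<beta> \<and> 0 \<le> snd R \<and> snd R \<le> \<beta> \<longrightarrow>
        (\<forall>lj \<in> {l1, l2}.
           0 < Inf (ratios \<beta> l1 l2 lj R) \<and> bdd_below (ratios \<beta> l1 l2 lj R) \<and>
           bdd_above (ratios \<beta> l1 l2 lj R)))"

end

theory Submission
  imports Defs
begin

text \<open>
  Necessity. Let N be the L-index of F and A(z) the maximum of the normalised derivatives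
  of F at z of total order at most N. Through the Taylor series, A(z) bounds |F| on the polydisc
  of radius 1/(2L(z)) around z, and by Cauchy's inequality A(z) is at most
  M(R'/L(z), z, F)/\<rho>^N with \<rho> = min(r1', r2', 1). Since L \<in> Q^2 changes only by
  bounded factors on polydiscs of radius \<beta>/L(z), A changes by a bounded factor between points
  at distance 1/(4L), and a fixed number of such steps reaches the skeleton of radius
  R''/L(z) from z.

  Sufficiency. Cauchy's inequality on the skeleton of radius \<beta>/L(z) gives
  n(p,q) \<beta>^(p+q) \<le> M(\<beta>/L) \<le> p1 M(1/L) \<le> p1 \<Sum> n for the normalised
  derivatives n(p,q) at z, so they decay geometrically relative to their sum. This forces their
  maximum to be attained for p + q \<le> n0 with n0 independent of z.
\<close>

section \<open>Holomorphy of partial derivatives\<close>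

lemma funpow_pd2_eq_higher_deriv: "(pd2 ^^ q) F (u, v) = (deriv ^^ q) (\<lambda>v. F (u, v)) v"
proof (induction q arbitrary: v)
  case (Suc q)
  have "(pd2 ^^ Suc q) F (u, v) = deriv (\<lambda>w. (pd2 ^^ q) F (u, w)) v"
    by (simp add: pd2_def)
  also have "(\<lambda>w. (pd2 ^^ q) F (u, w)) = (deriv ^^ q) (\<lambda>v. F (u, v))"
    using Suc by auto
  finally show ?case by simp
qed simp

lemma funpow_pd1_eq_higher_deriv: "(pd1 ^^ p) G (u, v) = (deriv ^^ p) (\<lambda>u. G (u, v)) u"
proof (induction p arbitrary: u)
  case (Suc p)
  have "(pd1 ^^ Suc p) G (u, v) = deriv (\<lambda>w. (pd1 ^^ p) G (w, v)) u"
    by (simp add: pd1_def)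
  also have "(\<lambda>w. (pd1 ^^ p) G (w, v)) = (deriv ^^ p) (\<lambda>u. G (u, v))"
    using Suc by auto
  finally show ?case by simp
qed simp

lemma pderiv2_eq_higher_deriv:
  "pderiv2 F p q (a, b) = (deriv ^^ p) (\<lambda>u. (deriv ^^ q) (\<lambda>v. F (u, v)) b) a"
  by (simp add: pderiv2_def funpow_pd1_eq_higher_deriv funpow_pd2_eq_higher_deriv)

lemma analytic2_holomorphic_on_fst_slice:
  assumes "analytic2 F" "cmod v < 1"
  shows "(\<lambda>u. F (u, v)) holomorphic_on ball 0 1"
  unfolding holomorphic_on_def
proof
  fix u :: complex assume "u \<in> ball 0 1"
  then have "(u, v) \<in> bidisc" using assms(2) by (simp add: bidisc_def)
  then have "(\<lambda>w. F (w, v)) field_differentiable at u"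
    using assms(1) unfolding analytic2_def by force
  then show "(\<lambda>u. F (u, v)) field_differentiable at u within ball 0 1"
    by (rule field_differentiable_at_within)
qed

lemma analytic2_holomorphic_on_snd_slice:
  assumes "analytic2 F" "cmod u < 1"
  shows "(\<lambda>v. F (u, v)) holomorphic_on ball 0 1"
  unfolding holomorphic_on_def
proof
  fix v :: complex assume "v \<in> ball 0 1"
  then have "(u, v) \<in> bidisc" using assms(2) by (simp add: bidisc_def)
  then have "(\<lambda>w. F (u, w)) field_differentiable at v"
    using assms(1) unfolding analytic2_def by force
  then show "(\<lambda>v. F (u, v)) field_differentiable at v within ball 0 1"
    by (rule field_differentiable_at_within)
qed

lemma continuous_on_contour_integral_circlepath:
  assumes f: "continuous_on (U \<times> sphere c r) (\<lambda>(x, y). f x y)" and r: "0 < r"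
  shows "continuous_on U (\<lambda>x. contour_integral (circlepath c r) (f x))"
proof -
  let ?\<gamma> = "circlepath c r"
  have cp: "continuous_on UNIV ?\<gamma>"
    unfolding circlepath by (intro continuous_intros)
  have vd: "continuous_on UNIV (\<lambda>t. vector_derivative ?\<gamma> (at t))"
    unfolding vector_derivative_circlepath by (intro continuous_intros)
  have "continuous_on (U \<times> cbox 0 1)
      (\<lambda>p. (\<lambda>(x, y). f x y) (fst p, ?\<gamma> (snd p)) * vector_derivative ?\<gamma> (at (snd p)))"
  proof (intro continuous_on_mult continuous_on_compose2[OF f] continuous_intros)
    show "(\<lambda>p. (fst p, ?\<gamma> (snd p))) ` (U \<times> cbox 0 1) \<subseteq> U \<times> sphere c r"
      using r path_image_circlepath[of c r] by (auto simp: path_image_def)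
  qed (auto intro!: continuous_on_compose2[OF vd] continuous_on_compose2[OF cp] continuous_intros)
  then have "continuous_on (U \<times> cbox 0 1)
      (\<lambda>(x, t). f x (?\<gamma> t) * vector_derivative ?\<gamma> (at t))"
    by (simp add: case_prod_beta)
  from integral_continuous_on_param[OF this] show ?thesis
    by (simp add: contour_integral_integral)
qed

text \<open>Fubini for contour integrals lets Cauchy's formula in x pass under the integral sign,
  so H reproduces itself by Cauchy's formula on every small circle.\<close>
lemma holomorphic_on_contour_integral_circlepath:
  assumes f: "continuous_on (cball z r \<times> sphere c s) (\<lambda>(x, y). f x y)"
    and hol: "\<And>y. y \<in> sphere c s \<Longrightarrow> (\<lambda>x. f x y) holomorphic_on ball z r"
    and r: "0 < r" and s: "0 < s"
  shows "(\<lambda>x. contour_integral (circlepath c s) (f x)) holomorphic_on ball z r"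
proof -
  define H where "H x = contour_integral (circlepath c s) (f x)" for x
  have contH: "continuous_on (cball z r) H"
    unfolding H_def by (rule continuous_on_contour_integral_circlepath[OF f s])
  have int_f: "f x contour_integrable_on circlepath c s" if "x \<in> cball z r" for x
  proof -
    have "continuous_on (sphere c s) (\<lambda>y. (\<lambda>(x, y). f x y) (x, y))"
      using that by (intro continuous_on_compose2[OF f] continuous_intros) auto
    then show ?thesis
      using s by (intro contour_integrable_continuous_circlepath) simp
  qed
  have Cauchy_H: "((\<lambda>x. H x / (x - w) ^ 1) has_contour_integral (2 * pi * \<i> * H w)) (circlepath z r)"
    if w: "w \<in> ball z r" for w
  proof -
    have ne: "x - w \<noteq> 0" if "x \<in> sphere z r" for x
      using that w by (auto simp: dist_norm)
    have "contour_integral (circlepath z r) (\<lambda>x. H x / (x - w))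
        = contour_integral (circlepath z r) (\<lambda>x. contour_integral (circlepath c s) (\<lambda>y. f x y / (x - w)))"
    proof (rule contour_integral_eq)
      fix x assume "x \<in> path_image (circlepath z r)"
      then have "x \<in> cball z r" using r sphere_cball by auto
      then show "H x / (x - w) = contour_integral (circlepath c s) (\<lambda>y. f x y / (x - w))"
        unfolding H_def by (rule contour_integral_div[OF int_f, symmetric])
    qed
    also have "\<dots> = contour_integral (circlepath c s) (\<lambda>y. contour_integral (circlepath z r) (\<lambda>x. f x y / (x - w)))"
    proof (rule contour_integral_swap)
      show "continuous_on (path_image (circlepath z r) \<times> path_image (circlepath c s))
          (\<lambda>(x, y). f x y / (x - w))"
      proof -
        have "sphere z r \<times> sphere c s \<subseteq> cball z r \<times> sphere c s"
          using sphere_cball by blast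
        from continuous_on_subset[OF f this]
        have "continuous_on (sphere z r \<times> sphere c s) (\<lambda>p. f (fst p) (snd p))"
          by (simp add: case_prod_beta)
        then show ?thesis
          using r s ne by (auto simp: case_prod_beta intro!: continuous_intros)
      qed
    qed (auto simp: vector_derivative_circlepath intro!: continuous_intros)
    also have "\<dots> = contour_integral (circlepath c s) (\<lambda>y. 2 * pi * \<i> * f w y)"
    proof (rule contour_integral_eq)
      fix y assume "y \<in> path_image (circlepath c s)"
      then have y: "y \<in> sphere c s" using s by simp
      have "continuous_on (cball z r) (\<lambda>x. (\<lambda>(x, y). f x y) (x, y))"
        using y by (intro continuous_on_compose2[OF f] continuous_intros) auto
      then show "contour_integral (circlepath z r) (\<lambda>x. f x y / (x - w)) = 2 * pi * \<i> * f w y"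
        using Cauchy_integral_circlepath[OF _ hol[OF y]] w contour_integral_unique
        by (auto simp: dist_norm norm_minus_commute)
    qed
    also have "\<dots> = 2 * pi * \<i> * H w"
      unfolding H_def using w by (intro contour_integral_lmul int_f) auto
    finally have eq: "contour_integral (circlepath z r) (\<lambda>x. H x / (x - w)) = 2 * pi * \<i> * H w" .
    have "(\<lambda>x. H x / (x - w)) contour_integrable_on circlepath z r"
      using r ne sphere_cball
      by (intro contour_integrable_continuous_circlepath continuous_intros
          continuous_on_subset[OF contH]) auto
    then show ?thesis using eq has_contour_integral_integral by fastforce
  qed
  have contH_circle: "continuous_on (path_image (circlepath z r)) H"
    using contH r sphere_cball by (auto intro: continuous_on_subset)
  have "(\<lambda>w. 2 * pi * \<i> * H w) field_differentiable at w" if "w \<in> ball z r" for w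
    using Cauchy_next_derivative_circlepath(2)[OF contH_circle Cauchy_H _ that]
    by (auto simp: field_differentiable_def)
  then have "(\<lambda>w. 2 * pi * \<i> * H w) holomorphic_on ball z r"
    by (auto simp: holomorphic_on_def intro: field_differentiable_at_within)
  then have "(\<lambda>w. inverse (2 * pi * \<i>) * (2 * pi * \<i> * H w)) holomorphic_on ball z r"
    by (rule holomorphic_on_mult[OF holomorphic_on_const])
  then have "H holomorphic_on ball z r"
    by (rule holomorphic_transform) (simp add: field_simps)
  then show ?thesis unfolding H_def .
qed

text \<open>F is only assumed jointly continuous and separately holomorphic. The Cauchy integral
  formula in v turns the q-th v-derivative into an integral depending on the parameter u, and such
  integrals are holomorphic in u.\<close>
lemma analytic2_holomorphic_on_higher_deriv_snd:
  assumes F: "analytic2 F" and b: "cmod b < 1"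
  shows "(\<lambda>u. (deriv ^^ q) (\<lambda>v. F (u, v)) b) holomorphic_on ball 0 1"
proof -
  define s where "s = (1 - cmod b) / 2"
  have s: "0 < s" and sub_s: "cball b s \<subseteq> ball 0 1"
    using b by (auto simp: s_def cball_subset_ball_iff field_simps)
  define K where "K u = contour_integral (circlepath b s) (\<lambda>v. F (u, v) / (v - b) ^ Suc q)" for u
  have Cauchy: "(deriv ^^ q) (\<lambda>v. F (u, v)) b = fact q / (2 * pi * \<i>) * K u"
    if "u \<in> ball 0 1" for u
  proof -
    have "(\<lambda>v. F (u, v)) holomorphic_on cball b s"
      using analytic2_holomorphic_on_snd_slice[OF F] that holomorphic_on_subset[OF _ sub_s] by simp
    then show ?thesis
      unfolding K_def using s
      by (intro Cauchy_higher_derivative_integral_circlepath(2))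
         (auto intro: holomorphic_on_imp_continuous_on holomorphic_on_subset[OF _ ball_subset_cball])
  qed
  have "K field_differentiable at u0" if u0: "u0 \<in> ball 0 1" for u0
  proof -
    define r where "r = (1 - cmod u0) / 2"
    have r: "0 < r" and sub_r: "cball u0 r \<subseteq> ball 0 1"
      using u0 by (auto simp: r_def cball_subset_ball_iff field_simps)
    have "cball u0 r \<times> sphere b s \<subseteq> bidisc"
      using sub_r sub_s sphere_cball by (force simp: bidisc_def)
    then have "continuous_on (cball u0 r \<times> sphere b s) F"
      using F continuous_on_subset unfolding analytic2_def by blast
    then have "continuous_on (cball u0 r \<times> sphere b s) (\<lambda>p. F p / (snd p - b) ^ Suc q)"
      by (rule continuous_on_divide) (use s in \<open>auto intro!: continuous_intros\<close>)
    moreover have "(\<lambda>u. F (u, v) / (v - b) ^ Suc q) holomorphic_on ball u0 r"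
      if "v \<in> sphere b s" for v
    proof -
      have "v \<in> ball 0 1" using that sub_s sphere_cball by blast
      moreover have "ball u0 r \<subseteq> ball 0 1" using sub_r ball_subset_cball by blast
      ultimately have "(\<lambda>u. F (u, v)) holomorphic_on ball u0 r"
        using holomorphic_on_subset[OF analytic2_holomorphic_on_fst_slice[OF F]] by simp
      then show ?thesis
        by (rule holomorphic_on_divide[OF _ holomorphic_on_const]) (use that s in auto)
    qed
    ultimately have "K holomorphic_on ball u0 r"
      unfolding K_def using r s
      by (intro holomorphic_on_contour_integral_circlepath) (auto simp: case_prod_beta)
    then show ?thesis using r by (auto intro: holomorphic_on_imp_differentiable_at)
  qed
  then have "K holomorphic_on ball 0 1"
    by (auto simp: holomorphic_on_def intro: field_differentiable_at_within)
  then have "(\<lambda>u. fact q / (2 * pi * \<i>) * K u) holomorphic_on ball 0 1"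
    by (rule holomorphic_on_mult[OF holomorphic_on_const])
  then show ?thesis
    by (rule holomorphic_transform) (simp add: Cauchy)
qed

section \<open>Cauchy inequality and Taylor expansion on the bidisc\<close>

lemma torus2_eq_Times: "torus2 z R = sphere (fst z) (fst R) \<times> sphere (snd z) (snd R)"
  by (auto simp: torus2_def dist_norm norm_minus_commute)

lemma point_in_torus2:
  assumes "0 \<le> fst R" "0 \<le> snd R"
  shows "(fst z + of_real (fst R), snd z + of_real (snd R)) \<in> torus2 z R"
  using assms by (simp add: torus2_def)

lemma norm_le_maxmod:
  assumes F: "analytic2 F" and sub: "torus2 z R \<subseteq> bidisc" and w: "w \<in> torus2 z R"
  shows "cmod (F w) \<le> maxmod R z F"
proof -
  have "compact (torus2 z R)"
    unfolding torus2_eq_Times by (intro compact_Times compact_sphere)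
  moreover have "continuous_on (torus2 z R) (\<lambda>z. cmod (F z))"
    using F sub unfolding analytic2_def by (blast intro: continuous_on_norm continuous_on_subset)
  ultimately have "bdd_above ((\<lambda>z. cmod (F z)) ` torus2 z R)"
    by (intro bounded_imp_bdd_above compact_imp_bounded compact_continuous_image)
  then show ?thesis unfolding maxmod_def using w by (rule cSUP_upper2) simp
qed

text \<open>The radii must be nonnegative: on an empty skeleton the supremum is a junk value.\<close>
lemma maxmod_le:
  assumes "0 \<le> fst R" "0 \<le> snd R" and "\<And>w. w \<in> torus2 z R \<Longrightarrow> cmod (F w) \<le> B"
  shows "maxmod R z F \<le> B"
  unfolding maxmod_def by (rule cSUP_least) (use assms point_in_torus2[of R z] in auto)

lemma torus2_subset_bidisc:
  assumes "cmod a + r1 < 1" "cmod b + r2 < 1"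
  shows "torus2 (a, b) (r1, r2) \<subseteq> bidisc"
proof -
  have "cmod x < 1" if "cmod (x - c) = r" "cmod c + r < 1" for x c r
    using that norm_triangle_ineq[of c "x - c"] by simp
  then show ?thesis using assms by (auto simp: torus2_def bidisc_def)
qed

lemma Cauchy_inequality_bidisc:
  assumes F: "analytic2 F" and r: "0 < r1" "0 < r2"
    and ab: "cmod a + r1 < 1" "cmod b + r2 < 1"
  shows "cmod (pderiv2 F p q (a, b))
    \<le> fact p * fact q * maxmod (r1, r2) (a, b) F / (r1 ^ p * r2 ^ q)"
proof -
  define M where "M = maxmod (r1, r2) (a, b) F"
  define g where "g = (\<lambda>u. (deriv ^^ q) (\<lambda>v. F (u, v)) b)"
  have sub_a: "cball a r1 \<subseteq> ball 0 1" and sub_b: "cball b r2 \<subseteq> ball 0 1"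
    using ab by (auto simp: cball_subset_ball_iff)
  have "g holomorphic_on ball 0 1"
    unfolding g_def using ab r by (intro analytic2_holomorphic_on_higher_deriv_snd[OF F]) auto
  then have hol_g: "g holomorphic_on cball a r1"
    using sub_a holomorphic_on_subset by blast
  have g_bound: "cmod (g x) \<le> fact q * M / r2 ^ q" if x: "cmod (a - x) = r1" for x
  proof -
    have "x \<in> ball 0 1" using x sub_a by (auto simp: dist_norm)
    then have hol_x: "(\<lambda>v. F (x, v)) holomorphic_on cball b r2"
      using holomorphic_on_subset[OF analytic2_holomorphic_on_snd_slice[OF F] sub_b] by simp
    show ?thesis unfolding g_def
    proof (rule Cauchy_inequality[OF _ _ r(2)])
      show "(\<lambda>v. F (x, v)) holomorphic_on ball b r2"
        using hol_x ball_subset_cball holomorphic_on_subset by blast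
      show "continuous_on (cball b r2) (\<lambda>v. F (x, v))"
        using hol_x by (rule holomorphic_on_imp_continuous_on)
      fix y assume "cmod (b - y) = r2"
      then have "(x, y) \<in> torus2 (a, b) (r1, r2)"
        using x by (simp add: torus2_def norm_minus_commute)
      then show "cmod (F (x, y)) \<le> M"
        unfolding M_def by (rule norm_le_maxmod[OF F torus2_subset_bidisc[OF ab]])
    qed
  qed
  have "cmod ((deriv ^^ p) g a) \<le> fact p * (fact q * M / r2 ^ q) / r1 ^ p"
  proof (rule Cauchy_inequality[OF _ _ r(1) g_bound])
    show "g holomorphic_on ball a r1"
      using hol_g ball_subset_cball holomorphic_on_subset by blast
  qed (use hol_g holomorphic_on_imp_continuous_on in auto)
  then show ?thesis
    unfolding pderiv2_eq_higher_deriv g_def[symmetric] M_def by (simp add: field_simps)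
qed

lemma analytic2_iterated_power_series:
  assumes F: "analytic2 F" and ab: "cmod a < 1" "cmod b < 1"
    and w: "cmod (w1 - a) < 1 - cmod a" "cmod (w2 - b) < 1 - cmod b"
  defines "c \<equiv> \<lambda>p q. pderiv2 F p q (a, b) / (fact p * fact q)"
  shows "\<And>q. (\<lambda>p. c p q * (w1 - a) ^ p) sums ((deriv ^^ q) (\<lambda>v. F (w1, v)) b / fact q)"
    and "(\<lambda>q. (\<Sum>p. c p q * (w1 - a) ^ p) * (w2 - b) ^ q) sums F (w1, w2)"
proof -
  have sub_a: "ball a (1 - cmod a) \<subseteq> ball 0 1" and sub_b: "ball b (1 - cmod b) \<subseteq> ball 0 1"
    by (auto simp: ball_subset_ball_iff)
  have w1: "w1 \<in> ball a (1 - cmod a)" and w2: "w2 \<in> ball b (1 - cmod b)"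
    using w by (auto simp: dist_norm norm_minus_commute)
  show inner: "(\<lambda>p. c p q * (w1 - a) ^ p) sums ((deriv ^^ q) (\<lambda>v. F (w1, v)) b / fact q)" for q
  proof -
    define g where "g = (\<lambda>u. (deriv ^^ q) (\<lambda>v. F (u, v)) b)"
    have "g holomorphic_on ball a (1 - cmod a)"
      unfolding g_def using analytic2_holomorphic_on_higher_deriv_snd[OF F ab(2)] sub_a
      by (rule holomorphic_on_subset)
    from sums_divide[OF holomorphic_power_series[OF this w1], of "fact q"]
    show ?thesis by (simp add: c_def g_def pderiv2_eq_higher_deriv)
  qed
  have "w1 \<in> ball 0 1" using w1 sub_a by blast
  then have "(\<lambda>v. F (w1, v)) holomorphic_on ball b (1 - cmod b)"
    using holomorphic_on_subset[OF analytic2_holomorphic_on_snd_slice[OF F] sub_b] by simp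
  from holomorphic_power_series[OF this w2] show "(\<lambda>q. (\<Sum>p. c p q * (w1 - a) ^ p) * (w2 - b) ^ q) sums F (w1, w2)"
    using inner by (simp add: sums_iff)
qed

lemma analytic2_norm_le_double_suminf:
  assumes F: "analytic2 F" and ab: "cmod a < 1" "cmod b < 1"
    and w: "cmod (w1 - a) < 1 - cmod a" "cmod (w2 - b) < 1 - cmod b"
    and d: "\<And>p q. cmod (pderiv2 F p q (a, b)) / (fact p * fact q) * cmod (w1 - a) ^ p * cmod (w2 - b) ^ q
      \<le> d p q"
    and d_summable: "\<And>q. summable (\<lambda>p. d p q)" "summable (\<lambda>q. \<Sum>p. d p q)"
  shows "cmod (F (w1, w2)) \<le> (\<Sum>q. \<Sum>p. d p q)"
proof -
  define c where "c = (\<lambda>p q. pderiv2 F p q (a, b) / (fact p * fact q))"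
  note series = analytic2_iterated_power_series[OF F ab w]
  have row_norm: "cmod ((\<Sum>p. c p q * (w1 - a) ^ p) * (w2 - b) ^ q) \<le> (\<Sum>p. d p q)" for q
  proof -
    have "summable (\<lambda>p. c p q * (w1 - a) ^ p)"
      using series(1) unfolding c_def by (rule sums_summable)
    then have "(\<Sum>p. c p q * (w1 - a) ^ p) * (w2 - b) ^ q = (\<Sum>p. c p q * (w1 - a) ^ p * (w2 - b) ^ q)"
      by (rule suminf_mult2)
    also have "cmod \<dots> \<le> (\<Sum>p. d p q)"
    proof (rule norm_suminf_le[OF _ d_summable(1)])
      show "cmod (c p q * (w1 - a) ^ p * (w2 - b) ^ q) \<le> d p q" for p
        using d[of p q] by (simp add: c_def norm_mult norm_divide norm_power norm_fact)
    qed
    finally show ?thesis .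
  qed
  have "F (w1, w2) = (\<Sum>q. (\<Sum>p. c p q * (w1 - a) ^ p) * (w2 - b) ^ q)"
    using series(2) unfolding c_def by (simp add: sums_iff)
  then show ?thesis
    using norm_suminf_le[OF row_norm d_summable(2)] by simp
qed

section \<open>Double series dominated by their sum\<close>

lemma double_suminf_le_geometric:
  fixes a :: "nat \<Rightarrow> nat \<Rightarrow> real"
  assumes a_nonneg: "\<And>p q. 0 \<le> a p q" and a_le: "\<And>p q. a p q \<le> B * e1 ^ p * e2 ^ q"
    and e: "0 \<le> e1" "e1 < 1" "0 \<le> e2" "e2 < 1"
  shows "\<And>q. summable (\<lambda>p. a p q)" and "summable (\<lambda>q. \<Sum>p. a p q)"
    and "(\<Sum>q. \<Sum>p. a p q) \<le> B / ((1 - e1) * (1 - e2))"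
proof -
  have row: "(\<lambda>p. B * e1 ^ p * e2 ^ q) sums (B * e2 ^ q / (1 - e1))" for q
    using sums_mult[OF geometric_sums[of e1], of "B * e2 ^ q"] e by (simp add: mult_ac)
  have col: "(\<lambda>q. B * e2 ^ q / (1 - e1)) sums (B / (1 - e1) / (1 - e2))"
    using sums_mult[OF geometric_sums[of e2], of "B / (1 - e1)"] e by (simp add: mult_ac)
  show summable_row: "summable (\<lambda>p. a p q)" for q
    by (rule summable_comparison_test[of _ "\<lambda>p. B * e1 ^ p * e2 ^ q"])
      (use a_nonneg a_le row in \<open>auto simp: sums_iff\<close>)
  have row_le: "(\<Sum>p. a p q) \<le> B * e2 ^ q / (1 - e1)" for q
  proof -
    from row[of q] have S: "summable (\<lambda>p. B * e1 ^ p * e2 ^ q)"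
      and E: "(\<Sum>p. B * e1 ^ p * e2 ^ q) = B * e2 ^ q / (1 - e1)" by (auto simp: sums_iff)
    show ?thesis using suminf_le[OF a_le summable_row S] E by simp
  qed
  have row_nonneg: "0 \<le> (\<Sum>p. a p q)" for q by (rule suminf_nonneg[OF summable_row a_nonneg])
  show summable_col: "summable (\<lambda>q. \<Sum>p. a p q)"
    by (rule summable_comparison_test[of _ "\<lambda>q. B * e2 ^ q / (1 - e1)"])
      (use row_nonneg row_le col in \<open>auto simp: sums_iff\<close>)
  show "(\<Sum>q. \<Sum>p. a p q) \<le> B / ((1 - e1) * (1 - e2))"
    using suminf_le[OF row_le summable_col] col by (simp add: sums_iff field_simps)
qed

definition triangle :: "nat \<Rightarrow> (nat \<times> nat) set" where
  "triangle n = {k. fst k + snd k \<le> n}"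

lemma finite_triangle: "finite (triangle n)"
  unfolding triangle_def by (rule finite_subset[of _ "{..n} \<times> {..n}"]) auto

lemma zero_in_triangle: "(0, 0) \<in> triangle n"
  by (simp add: triangle_def)

lemma le_Max_triangle:
  "k \<in> triangle n \<Longrightarrow> f k \<le> Max (f ` triangle n)"
  by (simp add: finite_triangle)

lemma Max_triangle_nonneg:
  fixes f :: "nat \<times> nat \<Rightarrow> real"
  shows "(\<And>k. 0 \<le> f k) \<Longrightarrow> 0 \<le> Max (f ` triangle n)"
  using le_Max_triangle[OF zero_in_triangle, of f n] by (meson order_trans)

lemma triangle_geometric_majorant:
  fixes a :: "nat \<times> nat \<Rightarrow> real"
  assumes \<eta>: "0 < \<eta>" "\<eta> < 1" and B: "0 \<le> B"
    and a_nonneg: "\<And>k. 0 \<le> a k" and a_le: "\<And>p q. a (p, q) \<le> B * \<eta> ^ (2 * (p + q))"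
  shows "a (p, q) \<le> (Max (a ` triangle N) / \<eta> ^ (2 * N) + B * \<eta> ^ (N + 1)) * \<eta> ^ p * \<eta> ^ q"
proof (cases "p + q \<le> N")
  case True
  define A where "A = Max (a ` triangle N)"
  have "a (p, q) \<le> A"
    unfolding A_def using True by (intro le_Max_triangle) (simp add: triangle_def)
  also have "\<dots> \<le> A / \<eta> ^ (2 * N) * \<eta> ^ p * \<eta> ^ q"
  proof -
    have "\<eta> ^ (2 * N) \<le> \<eta> ^ (p + q)"
      using True \<eta> by (intro power_decreasing) auto
    moreover have "0 \<le> A"
      unfolding A_def using a_nonneg by (rule Max_triangle_nonneg)
    ultimately show ?thesis
      using \<eta> by (simp add: field_simps power_add mult_left_mono)
  qed
  also have "\<dots> \<le> (A / \<eta> ^ (2 * N) + B * \<eta> ^ (N + 1)) * \<eta> ^ p * \<eta> ^ q"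
    using B \<eta> by (simp add: distrib_right)
  finally show ?thesis unfolding A_def .
next
  case False
  have "\<eta> ^ (2 * (p + q)) = \<eta> ^ (p + q) * \<eta> ^ (p + q)"
    by (metis mult_2 power_add)
  then have "a (p, q) \<le> B * (\<eta> ^ (p + q) * \<eta> ^ (p + q))"
    using a_le[of p q] by (simp only:)
  also have "\<dots> \<le> B * (\<eta> ^ (N + 1) * \<eta> ^ (p + q))"
    using False \<eta> B by (intro mult_left_mono mult_right_mono power_decreasing) auto
  also have "\<dots> \<le> (Max (a ` triangle N) / \<eta> ^ (2 * N) + B * \<eta> ^ (N + 1)) * \<eta> ^ p * \<eta> ^ q"
    using Max_triangle_nonneg[of a N, OF a_nonneg] \<eta> by (simp add: algebra_simps power_add)
  finally show ?thesis .
qed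

text \<open>With \<eta> = sqrt \<theta>, terms in the triangle p + q \<le> N are bounded by their
  maximum and the others by P S \<theta>^(p+q); for N large the latter contribute at most S/2.\<close>
lemma double_suminf_le_Max_triangle:
  fixes \<theta> P :: real
  assumes \<theta>: "0 < \<theta>" "\<theta> < 1" and P: "0 < P"
  obtains N C where "0 < C"
    and "\<And>a. (\<And>k. 0 \<le> a k) \<Longrightarrow> (\<And>p q. a (p, q) \<le> P * (\<Sum>q. \<Sum>p. a (p, q)) * \<theta> ^ (p + q))
      \<Longrightarrow> (\<Sum>q. \<Sum>p. a (p, q)) \<le> C * Max (a ` triangle N)"
proof -
  define \<eta> where "\<eta> = sqrt \<theta>"
  have \<eta>: "0 < \<eta>" "\<eta> < 1" using \<theta> by (auto simp: \<eta>_def)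
  have \<theta>_pow: "\<theta> ^ n = \<eta> ^ (2 * n)" for n
    using \<theta> by (simp add: \<eta>_def power_mult)
  obtain N where N: "\<eta> ^ N < (1 - \<eta>) ^ 2 / (2 * P * \<eta>)"
    using real_arch_pow_inv[of "(1 - \<eta>) ^ 2 / (2 * P * \<eta>)" \<eta>] \<eta> P by auto
  then have N_half: "P * \<eta> ^ (N + 1) / (1 - \<eta>) ^ 2 \<le> 1 / 2"
    using \<eta> P by (simp add: pos_less_divide_eq field_simps)
  define C where "C = 2 / (\<eta> ^ (2 * N) * (1 - \<eta>) ^ 2)"
  have "(\<Sum>q. \<Sum>p. a (p, q)) \<le> C * Max (a ` triangle N)"
    if a_nonneg: "\<And>k. 0 \<le> a k"
      and a_le: "\<And>p q. a (p, q) \<le> P * (\<Sum>q. \<Sum>p. a (p, q)) * \<theta> ^ (p + q)" for a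
  proof -
    define S where "S = (\<Sum>q. \<Sum>p. a (p, q))"
    define A where "A = Max (a ` triangle N)"
    have "0 \<le> P * S" using a_nonneg[of "(0, 0)"] a_le[of 0 0] by (simp add: S_def)
    then have S: "0 \<le> S" using P by (simp add: zero_le_mult_iff)
    have "a (p, q) \<le> (A / \<eta> ^ (2 * N) + P * S * \<eta> ^ (N + 1)) * \<eta> ^ p * \<eta> ^ q" for p q
      unfolding A_def using a_le \<eta> P S
      by (intro triangle_geometric_majorant a_nonneg) (auto simp: S_def \<theta>_pow)
    then have "S \<le> (A / \<eta> ^ (2 * N) + P * S * \<eta> ^ (N + 1)) / ((1 - \<eta>) * (1 - \<eta>))"
      unfolding S_def using \<eta>
      by (intro double_suminf_le_geometric(3)[where a = "\<lambda>p q. a (p, q)"] a_nonneg) auto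
    also have "\<dots> = A / (\<eta> ^ (2 * N) * (1 - \<eta>) ^ 2) + P * \<eta> ^ (N + 1) / (1 - \<eta>) ^ 2 * S"
      by (simp add: power2_eq_square add_divide_distrib)
    also have "\<dots> \<le> A / (\<eta> ^ (2 * N) * (1 - \<eta>) ^ 2) + 1 / 2 * S"
      using N_half S by (intro add_left_mono mult_right_mono) auto
    finally show ?thesis unfolding S_def A_def C_def by simp
  qed
  moreover have "0 < C" using \<eta> by (simp add: C_def)
  ultimately show ?thesis using that by blast
qed

lemma le_Max_triangle_of_geometric_domination:
  fixes \<theta> P :: real
  assumes \<theta>: "0 < \<theta>" "\<theta> < 1" and P: "0 < P"
  obtains n0 where "\<And>a p q. (\<And>k. 0 \<le> a k)
      \<Longrightarrow> (\<And>p q. a (p, q) \<le> P * (\<Sum>q. \<Sum>p. a (p, q)) * \<theta> ^ (p + q))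
      \<Longrightarrow> a (p, q) \<le> Max (a ` triangle n0)"
proof -
  obtain N C where C: "0 < C"
    and S_le: "\<And>a. (\<And>k. 0 \<le> a k) \<Longrightarrow> (\<And>p q. a (p, q) \<le> P * (\<Sum>q. \<Sum>p. a (p, q)) * \<theta> ^ (p + q))
      \<Longrightarrow> (\<Sum>q. \<Sum>p. a (p, q)) \<le> C * Max (a ` triangle N)"
    by (rule double_suminf_le_Max_triangle[OF \<theta> P]) (rule that; blast)
  obtain M where M: "\<theta> ^ M < 1 / (P * C)"
    using real_arch_pow_inv[of "1 / (P * C)" \<theta>] \<theta> P C by auto
  have "a (p, q) \<le> Max (a ` triangle (N + M))"
    if a_nonneg: "\<And>k. 0 \<le> a k"
      and a_le: "\<And>p q. a (p, q) \<le> P * (\<Sum>q. \<Sum>p. a (p, q)) * \<theta> ^ (p + q)" for a p q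
  proof (cases "p + q \<le> N + M")
    case True
    then show ?thesis by (intro le_Max_triangle) (simp add: triangle_def)
  next
    case False
    define A where "A = Max (a ` triangle N)"
    have A: "0 \<le> A"
      unfolding A_def using a_nonneg by (rule Max_triangle_nonneg)
    have "a (p, q) \<le> P * (\<Sum>q. \<Sum>p. a (p, q)) * \<theta> ^ (p + q)" by (rule a_le)
    also have "\<dots> \<le> P * (C * A) * \<theta> ^ M"
    proof (rule mult_mono)
      show "P * (\<Sum>q. \<Sum>p. a (p, q)) \<le> P * (C * A)"
        using P S_le[OF a_nonneg a_le] by (simp add: A_def)
      show "\<theta> ^ (p + q) \<le> \<theta> ^ M"
        using False \<theta> by (intro power_decreasing) auto
    qed (use P C A \<theta> in auto)
    also have "\<dots> = (P * C * \<theta> ^ M) * A" by (simp add: mult_ac)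
    also have "\<dots> \<le> 1 * A"
    proof (rule mult_right_mono[OF _ A])
      show "P * C * \<theta> ^ M \<le> 1"
        using M P C by (simp add: pos_less_divide_eq mult_ac)
    qed
    also have "\<dots> = A" by simp
    also have "A \<le> Max (a ` triangle (N + M))"
    proof -
      have "a ` triangle N \<subseteq> a ` triangle (N + M)" by (auto simp: triangle_def)
      moreover have "a ` triangle N \<noteq> {}" using zero_in_triangle[of N] by blast
      ultimately show ?thesis
        unfolding A_def by (intro Max_mono finite_imageI finite_triangle)
    qed
    finally show ?thesis .
  qed
  then show ?thesis using that by blast
qed

section \<open>Admissible functions L\<close>

lemma nterm_nonneg: "0 \<le> l1 z \<Longrightarrow> 0 \<le> l2 z \<Longrightarrow> 0 \<le> nterm F l1 l2 z k"
  unfolding nterm_def by simp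

lemma nterm_zero: "nterm F l1 l2 z (0, 0) = cmod (F z)"
  by (simp add: nterm_def pderiv2_def)

context
  fixes \<beta> :: real and l1 l2 :: "complex \<times> complex \<Rightarrow> real"
  assumes beta: "0 \<le> \<beta>" and adm: "admissible_L \<beta> l1 l2"
begin

lemma admissible_L_radius:
  assumes z: "z \<in> bidisc" and t: "t \<le> \<beta>"
  shows "cmod (fst z) + t / l1 z < 1" "cmod (snd z) + t / l2 z < 1"
    and "0 < l1 z" "0 < l2 z"
proof -
  have d: "0 < 1 - cmod (fst z)" "0 < 1 - cmod (snd z)"
    using z by (auto simp: bidisc_def)
  have l: "\<beta> / (1 - cmod (fst z)) < l1 z" "\<beta> / (1 - cmod (snd z)) < l2 z"
    using adm z by (auto simp: admissible_L_def)
  then show pos: "0 < l1 z" "0 < l2 z"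
    using d beta by (meson divide_nonneg_pos le_less_trans less_le_not_le)+
  have "t < l1 z * (1 - cmod (fst z))" "t < l2 z * (1 - cmod (snd z))"
    using l d t by (simp_all add: pos_divide_less_eq)
  then show "cmod (fst z) + t / l1 z < 1" "cmod (snd z) + t / l2 z < 1"
    using pos by (simp_all add: field_simps)
qed

lemma admissible_L_pos: "z \<in> bidisc \<Longrightarrow> 0 < l1 z" "z \<in> bidisc \<Longrightarrow> 0 < l2 z"
  using admissible_L_radius[OF _ beta] by auto

lemma cpolydisc_divL_subset_bidisc:
  assumes z: "z \<in> bidisc" and t: "t1 \<le> \<beta>" "t2 \<le> \<beta>"
  shows "cpolydisc z (divL (t1, t2) l1 l2 z) \<subseteq> bidisc"
proof
  fix w assume "w \<in> cpolydisc z (divL (t1, t2) l1 l2 z)"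
  then have "cmod (fst w - fst z) \<le> t1 / l1 z" "cmod (snd w - snd z) \<le> t2 / l2 z"
    by (auto simp: cpolydisc_def divL_def)
  moreover have "cmod (fst w) \<le> cmod (fst z) + cmod (fst w - fst z)"
    "cmod (snd w) \<le> cmod (snd z) + cmod (snd w - snd z)"
    using norm_triangle_ineq[of "fst z" "fst w - fst z"] norm_triangle_ineq[of "snd z" "snd w - snd z"]
    by simp_all
  ultimately show "w \<in> bidisc"
    using admissible_L_radius(1)[OF z t(1)] admissible_L_radius(2)[OF z t(2)]
    by (simp add: bidisc_def)
qed

lemma torus2_divL_subset_bidisc:
  assumes z: "z \<in> bidisc" and t: "t1 \<le> \<beta>" "t2 \<le> \<beta>"
  shows "torus2 z (divL (t1, t2) l1 l2 z) \<subseteq> bidisc"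
  using cpolydisc_divL_subset_bidisc[OF assms] by (auto simp: torus2_def cpolydisc_def)

lemma nterm_le_maxmod:
  assumes F: "analytic2 F" and z: "z \<in> bidisc" and t: "0 < t1" "t1 \<le> \<beta>" "0 < t2" "t2 \<le> \<beta>"
  shows "nterm F l1 l2 z (p, q) * (t1 ^ p * t2 ^ q) \<le> maxmod (divL (t1, t2) l1 l2 z) z F"
proof -
  define M where "M = maxmod (divL (t1, t2) l1 l2 z) z F"
  have l: "0 < l1 z" "0 < l2 z" using admissible_L_pos z by auto
  have "cmod (pderiv2 F p q (fst z, snd z))
      \<le> fact p * fact q * M / ((t1 / l1 z) ^ p * (t2 / l2 z) ^ q)"
    using Cauchy_inequality_bidisc[OF F, of "t1 / l1 z" "t2 / l2 z" "fst z" "snd z" p q]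
      t l admissible_L_radius[OF z t(2)] admissible_L_radius[OF z t(4)]
    by (simp add: M_def divL_def)
  moreover have "0 < (t1 / l1 z) ^ p * (t2 / l2 z) ^ q" using t l by simp
  ultimately have "cmod (pderiv2 F p q z) * ((t1 / l1 z) ^ p * (t2 / l2 z) ^ q) / (fact p * fact q) \<le> M"
    by (simp add: pos_le_divide_eq pos_divide_le_eq mult_ac)
  then show ?thesis
    unfolding M_def[symmetric] nterm_def by (simp add: field_simps power_divide)
qed

lemma norm_le_nterm_double_suminf:
  assumes F: "analytic2 F" and z: "z \<in> bidisc" and rs: "0 \<le> r" "r \<le> \<beta>" "0 \<le> s" "s \<le> \<beta>"
    and w: "w \<in> cpolydisc z (divL (r, s) l1 l2 z)"
    and d: "\<And>p q. nterm F l1 l2 z (p, q) * r ^ p * s ^ q \<le> d p q"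
    and d_summable: "\<And>q. summable (\<lambda>p. d p q)" "summable (\<lambda>q. \<Sum>p. d p q)"
  shows "cmod (F w) \<le> (\<Sum>q. \<Sum>p. d p q)"
proof -
  have l: "0 < l1 z" "0 < l2 z" using admissible_L_pos z by auto
  have w_le: "cmod (fst w - fst z) \<le> r / l1 z" "cmod (snd w - snd z) \<le> s / l2 z"
    using w by (auto simp: cpolydisc_def divL_def)
  have "cmod (F (fst w, snd w)) \<le> (\<Sum>q. \<Sum>p. d p q)"
  proof (rule analytic2_norm_le_double_suminf[OF F _ _ _ _ _ d_summable])
    show "cmod (fst z) < 1" "cmod (snd z) < 1" using z by (auto simp: bidisc_def)
    show "cmod (fst w - fst z) < 1 - cmod (fst z)" "cmod (snd w - snd z) < 1 - cmod (snd z)"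
      using w_le admissible_L_radius[OF z rs(2)] admissible_L_radius[OF z rs(4)] by linarith+
    fix p q
    have "cmod (pderiv2 F p q (fst z, snd z)) / (fact p * fact q)
          * cmod (fst w - fst z) ^ p * cmod (snd w - snd z) ^ q
        \<le> cmod (pderiv2 F p q (fst z, snd z)) / (fact p * fact q)
          * (r / l1 z) ^ p * (s / l2 z) ^ q"
      by (intro mult_mono power_mono w_le) (use rs l in auto)
    also have "\<dots> = nterm F l1 l2 z (p, q) * r ^ p * s ^ q"
      unfolding nterm_def by (simp add: field_simps power_divide)
    finally show "cmod (pderiv2 F p q (fst z, snd z)) / (fact p * fact q)
        * cmod (fst w - fst z) ^ p * cmod (snd w - snd z) ^ q \<le> d p q"
      using d[of p q] by linarith
  qed
  then show ?thesis by simp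
qed

lemma maxmod_divL_nonneg:
  assumes F: "analytic2 F" and z: "z \<in> bidisc" and t: "0 \<le> t1" "t1 \<le> \<beta>" "0 \<le> t2" "t2 \<le> \<beta>"
  shows "0 \<le> maxmod (divL (t1, t2) l1 l2 z) z F"
proof -
  have "0 \<le> t1 / l1 z" "0 \<le> t2 / l2 z" using t admissible_L_pos[OF z] by auto
  then have "(fst z + of_real (t1 / l1 z), snd z + of_real (t2 / l2 z)) \<in> torus2 z (divL (t1, t2) l1 l2 z)"
    using point_in_torus2[of "divL (t1, t2) l1 l2 z" z] by (simp add: divL_def)
  from norm_le_maxmod[OF F torus2_divL_subset_bidisc[OF z t(2,4)] this]
  show ?thesis by (meson norm_ge_zero order_trans)
qed

lemma Max_nterm_le_maxmod:
  assumes F: "analytic2 F" and z: "z \<in> bidisc" and \<rho>: "0 < \<rho>" "\<rho> \<le> 1"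
    and r: "\<rho> \<le> r1" "r1 \<le> \<beta>" "\<rho> \<le> r2" "r2 \<le> \<beta>"
  shows "Max (nterm F l1 l2 z ` triangle N) \<le> maxmod (divL (r1, r2) l1 l2 z) z F / \<rho> ^ N"
proof (subst Max_le_iff)
  show "finite (nterm F l1 l2 z ` triangle N)" "nterm F l1 l2 z ` triangle N \<noteq> {}"
    using finite_triangle zero_in_triangle by blast+
  show "\<forall>x \<in> nterm F l1 l2 z ` triangle N. x \<le> maxmod (divL (r1, r2) l1 l2 z) z F / \<rho> ^ N"
  proof
    fix x assume "x \<in> nterm F l1 l2 z ` triangle N"
    then obtain p q where pq: "p + q \<le> N" and x: "x = nterm F l1 l2 z (p, q)"
      by (auto simp: triangle_def)
    have "0 \<le> x" using x admissible_L_pos[OF z] by (simp add: nterm_nonneg less_imp_le)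
    moreover have "\<rho> ^ N \<le> r1 ^ p * r2 ^ q"
    proof -
      have "\<rho> ^ N \<le> \<rho> ^ p * \<rho> ^ q"
        using pq \<rho> by (simp add: power_add[symmetric] power_decreasing)
      also have "\<dots> \<le> r1 ^ p * r2 ^ q"
        using \<rho> r by (intro mult_mono power_mono) auto
      finally show ?thesis .
    qed
    ultimately have "x * \<rho> ^ N \<le> x * (r1 ^ p * r2 ^ q)" by (simp add: mult_left_mono)
    also have "\<dots> \<le> maxmod (divL (r1, r2) l1 l2 z) z F"
      unfolding x using \<rho> r by (intro nterm_le_maxmod[OF F z]) auto
    finally show "x \<le> maxmod (divL (r1, r2) l1 l2 z) z F / \<rho> ^ N"
      using \<rho> by (simp add: pos_le_divide_eq)
  qed
qed

lemma norm_le_4_Max_nterm: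
  assumes F: "analytic2 F" and z: "z \<in> bidisc" and beta_half: "1 / 2 \<le> \<beta>"
    and index: "\<And>k. nterm F l1 l2 z k \<le> Max (nterm F l1 l2 z ` triangle N)"
    and w: "w \<in> cpolydisc z (divL (1 / 2, 1 / 2) l1 l2 z)"
  shows "cmod (F w) \<le> 4 * Max (nterm F l1 l2 z ` triangle N)"
proof -
  define A where "A = Max (nterm F l1 l2 z ` triangle N)"
  define d where "d p q = A * (1 / 2) ^ p * (1 / 2) ^ q" for p q :: nat
  have "0 \<le> A"
    unfolding A_def using admissible_L_pos[OF z] by (intro Max_triangle_nonneg nterm_nonneg) auto
  then have d_nonneg: "0 \<le> d p q" for p q by (simp add: d_def)
  note geometric = double_suminf_le_geometric[of d A "1 / 2" "1 / 2", OF d_nonneg]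
  have "cmod (F w) \<le> (\<Sum>q. \<Sum>p. d p q)"
  proof (rule norm_le_nterm_double_suminf[OF F z _ _ _ _ w _ geometric(1,2)])
    show "nterm F l1 l2 z (p, q) * (1 / 2) ^ p * (1 / 2) ^ q \<le> d p q" for p q
      unfolding d_def A_def using index by (intro mult_right_mono) auto
  qed (use beta_half in \<open>auto simp: d_def\<close>)
  also have "\<dots> \<le> 4 * A"
    using geometric(3) by (simp add: d_def)
  finally show ?thesis unfolding A_def .
qed

end

section \<open>Sufficiency\<close>

lemma bounded_L_index_triangle_iff:
  "bounded_L_index F l1 l2 \<longleftrightarrow>
    (\<exists>n0. \<forall>z \<in> bidisc. \<forall>p q. nterm F l1 l2 z (p, q) \<le> Max (nterm F l1 l2 z ` triangle n0))"
  by (simp add: bounded_L_index_def triangle_def)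

lemma maxmod_ratio_imp_bounded_L_index:
  assumes beta: "1 < \<beta>" and adm: "admissible_L \<beta> l1 l2" and F: "analytic2 F" and P: "0 < P"
    and ratio: "\<And>z. z \<in> bidisc \<Longrightarrow>
      maxmod (divL (\<beta>, \<beta>) l1 l2 z) z F \<le> P * maxmod (divL (1, 1) l1 l2 z) z F"
  shows "bounded_L_index F l1 l2"
proof -
  have \<theta>: "0 < 1 / \<beta>" "1 / \<beta> < 1" using beta by auto
  obtain n0 where n0: "\<And>a p q. (\<And>k. 0 \<le> a k)
      \<Longrightarrow> (\<And>p q. a (p, q) \<le> P * (\<Sum>q. \<Sum>p. a (p, q)) * (1 / \<beta>) ^ (p + q))
      \<Longrightarrow> a (p, q) \<le> Max (a ` triangle n0)"
    using le_Max_triangle_of_geometric_domination[OF \<theta> P] by blast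
  have "nterm F l1 l2 z (p, q) \<le> Max (nterm F l1 l2 z ` triangle n0)" if z: "z \<in> bidisc" for z p q
  proof (rule n0)
    let ?a = "nterm F l1 l2 z"
    define S where "S = (\<Sum>q. \<Sum>p. ?a (p, q))"
    define MB where "MB = maxmod (divL (\<beta>, \<beta>) l1 l2 z) z F"
    have l: "0 < l1 z" "0 < l2 z"
      using admissible_L_pos[OF _ adm z] beta by auto
    show a_nonneg: "0 \<le> ?a k" for k using l by (intro nterm_nonneg) auto
    have a_MB: "?a (p, q) * \<beta> ^ (p + q) \<le> MB" for p q
      using nterm_le_maxmod[OF _ adm F z, of \<beta> \<beta> p q] beta by (simp add: MB_def power_add)
    then have "?a (p, q) \<le> MB * (1 / \<beta>) ^ p * (1 / \<beta>) ^ q" for p q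
      using beta by (simp add: power_add power_divide pos_le_divide_eq)
    note summable = double_suminf_le_geometric[where a = "\<lambda>p q. ?a (p, q)", OF a_nonneg this]
    have "cmod (F w) \<le> S" if "w \<in> torus2 z (divL (1, 1) l1 l2 z)" for w
      unfolding S_def
      by (rule norm_le_nterm_double_suminf[where r = 1 and s = 1,
            OF _ adm F z _ _ _ _ _ _ summable(1,2)])
         (use that beta in \<open>auto simp: torus2_def cpolydisc_def\<close>)
    then have "maxmod (divL (1, 1) l1 l2 z) z F \<le> S"
      using l by (intro maxmod_le) (auto simp: divL_def)
    then have "MB \<le> P * S"
      using ratio[OF z] P unfolding MB_def by (meson mult_left_mono less_imp_le order_trans)
    then show "?a (p, q) \<le> P * S * (1 / \<beta>) ^ (p + q)" for p q
      using a_MB[of p q] beta by (simp add: power_one_over pos_le_divide_eq field_simps)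
  qed
  then show ?thesis unfolding bounded_L_index_triangle_iff by blast
qed

section \<open>Necessity\<close>

lemma norm_diff_segment_points:
  fixes z0 w :: "complex \<times> complex"
  shows "cmod (fst (z0 + a *\<^sub>R (w - z0)) - fst (z0 + b *\<^sub>R (w - z0))) = \<bar>a - b\<bar> * cmod (fst w - fst z0)"
    and "cmod (snd (z0 + a *\<^sub>R (w - z0)) - snd (z0 + b *\<^sub>R (w - z0))) = \<bar>a - b\<bar> * cmod (snd w - snd z0)"
  by (simp_all only: fst_add snd_add fst_scaleR snd_scaleR fst_diff snd_diff add_diff_cancel_left
      scaleR_diff_left[symmetric] norm_scaleR)

lemma le_power_mult_of_step:
  fixes g :: "nat \<Rightarrow> real"
  assumes K: "0 \<le> K" and step: "\<And>i. i < n \<Longrightarrow> g (Suc i) \<le> K * g i"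
  shows "g n \<le> K ^ n * g 0"
proof -
  have "g m \<le> K ^ m * g 0" if "m \<le> n" for m
    using that
  proof (induction m)
    case (Suc m)
    have "g (Suc m) \<le> K * g m" using Suc.prems by (intro step) auto
    also have "\<dots> \<le> K * (K ^ m * g 0)" using Suc K by (intro mult_left_mono) auto
    finally show ?case by simp
  qed simp
  then show ?thesis by simp
qed

lemma Q2_admissible_L: "Q2 \<beta> l1 l2 \<Longrightarrow> admissible_L \<beta> l1 l2"
  by (simp add: Q2_def)

lemma Q2_ratio_bounds:
  assumes Q: "Q2 \<beta> l1 l2" and r: "0 \<le> r1" "r1 \<le> \<beta>" "0 \<le> r2" "r2 \<le> \<beta>"
  obtains c C where "0 < c"
    and "\<And>z0 z. z0 \<in> bidisc \<Longrightarrow> z \<in> bidisc \<Longrightarrow> z \<in> cpolydisc z0 (divL (r1, r2) l1 l2 z0) \<Longrightarrow>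
      c * l1 z0 \<le> l1 z \<and> c * l2 z0 \<le> l2 z \<and> l1 z \<le> C * l1 z0 \<and> l2 z \<le> C * l2 z0"
proof -
  let ?X = "ratios \<beta> l1 l2"
  have bdd: "0 < Inf (?X l1 (r1, r2)) \<and> bdd_below (?X l1 (r1, r2)) \<and> bdd_above (?X l1 (r1, r2))"
      "0 < Inf (?X l2 (r1, r2)) \<and> bdd_below (?X l2 (r1, r2)) \<and> bdd_above (?X l2 (r1, r2))"
    using Q r unfolding Q2_def by auto
  define c where "c = min (Inf (?X l1 (r1, r2))) (Inf (?X l2 (r1, r2)))"
  define C where "C = max (Sup (?X l1 (r1, r2))) (Sup (?X l2 (r1, r2)))"
  have "c * l1 z0 \<le> l1 z \<and> c * l2 z0 \<le> l2 z \<and> l1 z \<le> C * l1 z0 \<and> l2 z \<le> C * l2 z0"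
    if z0: "z0 \<in> bidisc" and z: "z \<in> bidisc" "z \<in> cpolydisc z0 (divL (r1, r2) l1 l2 z0)" for z0 z
  proof -
    have "l1 z / l1 z0 \<in> ?X l1 (r1, r2)" "l2 z / l2 z0 \<in> ?X l2 (r1, r2)"
      using z0 z unfolding ratios_def by blast+
    then have "c \<le> l1 z / l1 z0" "c \<le> l2 z / l2 z0" "l1 z / l1 z0 \<le> C" "l2 z / l2 z0 \<le> C"
      using bdd unfolding c_def C_def
      by (auto intro: cInf_lower cSup_upper min.coboundedI1 min.coboundedI2
          max.coboundedI1 max.coboundedI2)
    moreover have "0 < l1 z0" "0 < l2 z0"
      using admissible_L_pos[OF _ Q2_admissible_L[OF Q] z0] r by auto
    ultimately show ?thesis by (simp add: pos_le_divide_eq pos_divide_le_eq)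
  qed
  moreover have "0 < c" using bdd by (simp add: c_def)
  ultimately show ?thesis using that by blast
qed

context
  fixes \<beta> :: real and l1 l2 :: "complex \<times> complex \<Rightarrow> real"
    and F :: "complex \<times> complex \<Rightarrow> complex" and N :: nat
  assumes beta: "1 < \<beta>" and Q: "Q2 \<beta> l1 l2" and F: "analytic2 F"
    and index: "\<And>z k. z \<in> bidisc \<Longrightarrow> nterm F l1 l2 z k \<le> Max (nterm F l1 l2 z ` triangle N)"
begin

lemma Max_nterm_le_of_near:
  obtains K where "0 < K"
    and "\<And>z0 z1. z0 \<in> bidisc \<Longrightarrow> z1 \<in> bidisc \<Longrightarrow> z1 \<in> cpolydisc z0 (divL (1 / 4, 1 / 4) l1 l2 z0) \<Longrightarrow>
      Max (nterm F l1 l2 z1 ` triangle N) \<le> K * Max (nterm F l1 l2 z0 ` triangle N)"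
proof -
  have adm: "admissible_L \<beta> l1 l2" using Q by (rule Q2_admissible_L)
  have quarter: "0 \<le> (1 / 4 :: real)" "1 / 4 \<le> \<beta>" using beta by auto
  obtain c where c: "0 < c" and ratio: "\<And>z0 z. z0 \<in> bidisc \<Longrightarrow> z \<in> bidisc \<Longrightarrow>
      z \<in> cpolydisc z0 (divL (1 / 4, 1 / 4) l1 l2 z0) \<Longrightarrow> c * l1 z0 \<le> l1 z \<and> c * l2 z0 \<le> l2 z"
    using Q2_ratio_bounds[OF Q quarter quarter] by metis
  define t where "t = min c 1 / 4"
  have t: "0 < t" "t \<le> 1" "t \<le> \<beta>" using c beta by (auto simp: t_def)
  define K where "K = 4 / t ^ N"
  have "Max (nterm F l1 l2 z1 ` triangle N) \<le> K * Max (nterm F l1 l2 z0 ` triangle N)"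
    if z0: "z0 \<in> bidisc" and z1: "z1 \<in> bidisc"
      and near: "z1 \<in> cpolydisc z0 (divL (1 / 4, 1 / 4) l1 l2 z0)" for z0 z1
  proof -
    have l_z0: "0 < l1 z0" "0 < l2 z0" and l_z1: "0 < l1 z1" "0 < l2 z1"
      using admissible_L_pos[OF _ adm] z0 z1 beta by auto
    have "t * l1 z0 \<le> l1 z1 / 4" "t * l2 z0 \<le> l2 z1 / 4"
      using ratio[OF z0 z1 near] l_z0 c
      by (auto simp: t_def intro: order_trans[OF mult_right_mono[OF min.cobounded1]])
    then have t_le: "t / l1 z1 \<le> (1 / 4) / l1 z0" "t / l2 z1 \<le> (1 / 4) / l2 z0"
      using l_z0 l_z1 by (simp_all add: field_simps)
    have "maxmod (divL (t, t) l1 l2 z1) z1 F \<le> 4 * Max (nterm F l1 l2 z0 ` triangle N)"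
    proof (rule maxmod_le)
      fix w assume w: "w \<in> torus2 z1 (divL (t, t) l1 l2 z1)"
      have "cmod (fst w - fst z0) \<le> cmod (fst w - fst z1) + cmod (fst z1 - fst z0)"
        "cmod (snd w - snd z0) \<le> cmod (snd w - snd z1) + cmod (snd z1 - snd z0)"
        using norm_triangle_ineq[of "fst w - fst z1" "fst z1 - fst z0"]
          norm_triangle_ineq[of "snd w - snd z1" "snd z1 - snd z0"] by simp_all
      then have "w \<in> cpolydisc z0 (divL (1 / 2, 1 / 2) l1 l2 z0)"
        using w near t_le by (auto simp: torus2_def cpolydisc_def divL_def)
      then show "cmod (F w) \<le> 4 * Max (nterm F l1 l2 z0 ` triangle N)"
        using beta by (intro norm_le_4_Max_nterm[OF _ adm F z0 _ index[OF z0]]) auto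
    qed (use t l_z1 in \<open>auto simp: divL_def\<close>)
    then have "maxmod (divL (t, t) l1 l2 z1) z1 F / t ^ N \<le> K * Max (nterm F l1 l2 z0 ` triangle N)"
      using t by (simp add: K_def divide_right_mono)
    moreover have "Max (nterm F l1 l2 z1 ` triangle N) \<le> maxmod (divL (t, t) l1 l2 z1) z1 F / t ^ N"
      using t beta by (intro Max_nterm_le_maxmod[OF _ adm F z1]) auto
    ultimately show ?thesis by linarith
  qed
  moreover have "0 < K" using t by (simp add: K_def)
  ultimately show ?thesis using that by blast
qed

text \<open>Walk from z0 to w in n equal steps. As L grows at most by the factor C0 on the
  polydisc of radius \<beta>/L(z0), each step is short relative to L at its starting point.\<close>
lemma norm_le_Max_nterm_on_cpolydisc:
  obtains C where "0 \<le> C"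
    and "\<And>z0 w. z0 \<in> bidisc \<Longrightarrow> w \<in> cpolydisc z0 (divL (\<beta>, \<beta>) l1 l2 z0) \<Longrightarrow>
      cmod (F w) \<le> C * Max (nterm F l1 l2 z0 ` triangle N)"
proof -
  have adm: "admissible_L \<beta> l1 l2" using Q by (rule Q2_admissible_L)
  have b: "0 \<le> \<beta>" "\<beta> \<le> \<beta>" using beta by auto
  obtain C0 where ratio: "\<And>z0 z. z0 \<in> bidisc \<Longrightarrow> z \<in> bidisc \<Longrightarrow>
      z \<in> cpolydisc z0 (divL (\<beta>, \<beta>) l1 l2 z0) \<Longrightarrow> l1 z \<le> C0 * l1 z0 \<and> l2 z \<le> C0 * l2 z0"
    using Q2_ratio_bounds[OF Q b b] by metis
  obtain K where K: "0 < K" and step: "\<And>z0 z1. z0 \<in> bidisc \<Longrightarrow> z1 \<in> bidisc \<Longrightarrow>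
      z1 \<in> cpolydisc z0 (divL (1 / 4, 1 / 4) l1 l2 z0) \<Longrightarrow>
      Max (nterm F l1 l2 z1 ` triangle N) \<le> K * Max (nterm F l1 l2 z0 ` triangle N)"
    using Max_nterm_le_of_near by blast
  define n where "n = nat \<lceil>4 * \<beta> * max C0 1\<rceil> + 1"
  have n: "0 < n" "4 * \<beta> * max C0 1 \<le> real n" unfolding n_def by linarith+
  have "cmod (F w) \<le> K ^ n * Max (nterm F l1 l2 z0 ` triangle N)"
    if z0: "z0 \<in> bidisc" and w: "w \<in> cpolydisc z0 (divL (\<beta>, \<beta>) l1 l2 z0)" for z0 w
  proof -
    let ?A = "\<lambda>z. Max (nterm F l1 l2 z ` triangle N)"
    define z where "z i = z0 + (real i / real n) *\<^sub>R (w - z0)" for i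
    have l0: "0 < l1 z0" "0 < l2 z0" using admissible_L_pos[OF _ adm] z0 beta by auto
    have w_le: "cmod (fst w - fst z0) \<le> \<beta> / l1 z0" "cmod (snd w - snd z0) \<le> \<beta> / l2 z0"
      using w by (auto simp: cpolydisc_def divL_def)
    have dist_z: "cmod (fst (z j) - fst (z i)) = \<bar>real j - real i\<bar> / n * cmod (fst w - fst z0)"
      "cmod (snd (z j) - snd (z i)) = \<bar>real j - real i\<bar> / n * cmod (snd w - snd z0)" for i j
      unfolding z_def norm_diff_segment_points by (simp_all flip: diff_divide_distrib add: abs_divide)
    have z_in: "z i \<in> cpolydisc z0 (divL (\<beta>, \<beta>) l1 l2 z0)" if "i \<le> n" for i
    proof -
      have "z 0 = z0" by (simp add: z_def)
      moreover have "\<bar>real i - real 0\<bar> / n \<le> 1" using that n by simp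
      ultimately have "cmod (fst (z i) - fst z0) \<le> 1 * (\<beta> / l1 z0)"
        "cmod (snd (z i) - snd z0) \<le> 1 * (\<beta> / l2 z0)"
        using dist_z[of i 0] w_le by (metis mult_mono norm_ge_zero zero_le_one)+
      then show ?thesis by (simp add: cpolydisc_def divL_def)
    qed
    then have z_bidisc: "z i \<in> bidisc" if "i \<le> n" for i
      using cpolydisc_divL_subset_bidisc[OF _ adm z0, of \<beta> \<beta>] that beta by auto
    have short: "x / n \<le> (1 / 4) / li"
      if "0 \<le> x" "x \<le> \<beta> / l0" "0 < li" "li \<le> C0 * l0" "0 < l0" for x li l0
    proof -
      have "x / n \<le> \<beta> / l0 / n" using divide_right_mono[OF that(2), of n] by simp
      also have "\<dots> \<le> (1 / 4) / li"
      proof -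
        have "li \<le> max C0 1 * l0"
          using that by (meson max.cobounded1 mult_right_mono order_trans less_imp_le)
        then have "\<beta> * (4 * li) \<le> 4 * \<beta> * max C0 1 * l0"
          using beta by (simp add: mult_left_mono mult.assoc)
        also have "\<dots> \<le> n * l0" using n that by (intro mult_right_mono) auto
        finally show ?thesis using that n by (simp add: field_simps)
      qed
      finally show ?thesis .
    qed
    have z_step: "z (Suc i) \<in> cpolydisc (z i) (divL (1 / 4, 1 / 4) l1 l2 (z i))" if "i < n" for i
    proof -
      have li: "l1 (z i) \<le> C0 * l1 z0" "l2 (z i) \<le> C0 * l2 z0"
        using ratio[OF z0 z_bidisc z_in] that by auto
      have "0 < l1 (z i)" "0 < l2 (z i)"
        using admissible_L_pos[OF _ adm z_bidisc] that beta by auto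
      then show ?thesis
        using short[OF _ w_le(1) _ li(1) l0(1)] short[OF _ w_le(2) _ li(2) l0(2)] dist_z[of "Suc i" i]
        by (simp add: cpolydisc_def divL_def)
    qed
    have "?A (z n) \<le> K ^ n * ?A (z 0)"
      using K by (intro le_power_mult_of_step step z_bidisc z_step) auto
    moreover have "z n = w" "z 0 = z0" using n by (simp_all add: z_def)
    ultimately have "?A w \<le> K ^ n * ?A z0" by simp
    moreover have "cmod (F w) \<le> ?A w"
      using index[of w "(0, 0)"] z_bidisc[of n] \<open>z n = w\<close> by (simp add: nterm_zero)
    ultimately show ?thesis by linarith
  qed
  then show ?thesis using that K by (meson less_imp_le zero_le_power)
qed

lemma bounded_L_index_imp_maxmod_ratio:
  assumes r': "0 < r1'" "r1' \<le> \<beta>" "0 < r2'" "r2' \<le> \<beta>"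
    and r'': "0 \<le> r1''" "r1'' \<le> \<beta>" "0 \<le> r2''" "r2'' \<le> \<beta>"
  obtains p1 where "1 \<le> p1"
    and "\<And>z0. z0 \<in> bidisc \<Longrightarrow>
      maxmod (divL (r1'', r2'') l1 l2 z0) z0 F \<le> p1 * maxmod (divL (r1', r2') l1 l2 z0) z0 F"
proof -
  have adm: "admissible_L \<beta> l1 l2" using Q by (rule Q2_admissible_L)
  obtain C where C: "0 \<le> C" and far: "\<And>z0 w. z0 \<in> bidisc \<Longrightarrow> w \<in> cpolydisc z0 (divL (\<beta>, \<beta>) l1 l2 z0)
      \<Longrightarrow> cmod (F w) \<le> C * Max (nterm F l1 l2 z0 ` triangle N)"
    using norm_le_Max_nterm_on_cpolydisc by blast
  define \<rho> where "\<rho> = min (min r1' r2') 1"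
  have \<rho>: "0 < \<rho>" "\<rho> \<le> 1" "\<rho> \<le> r1'" "\<rho> \<le> r2'" using r' by (auto simp: \<rho>_def)
  define p1 where "p1 = max 1 (C / \<rho> ^ N)"
  have "maxmod (divL (r1'', r2'') l1 l2 z0) z0 F \<le> p1 * maxmod (divL (r1', r2') l1 l2 z0) z0 F"
    if z0: "z0 \<in> bidisc" for z0
  proof -
    define M' where "M' = maxmod (divL (r1', r2') l1 l2 z0) z0 F"
    have l0: "0 < l1 z0" "0 < l2 z0" using admissible_L_pos[OF _ adm z0] beta by auto
    have "maxmod (divL (r1'', r2'') l1 l2 z0) z0 F \<le> C * Max (nterm F l1 l2 z0 ` triangle N)"
    proof (rule maxmod_le)
      fix w assume "w \<in> torus2 z0 (divL (r1'', r2'') l1 l2 z0)"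
      then have "w \<in> cpolydisc z0 (divL (\<beta>, \<beta>) l1 l2 z0)"
        using r'' l0 by (auto simp: torus2_def cpolydisc_def divL_def divide_right_mono)
      then show "cmod (F w) \<le> C * Max (nterm F l1 l2 z0 ` triangle N)" by (rule far[OF z0])
    qed (use r'' l0 in \<open>auto simp: divL_def\<close>)
    also have "\<dots> \<le> C * (M' / \<rho> ^ N)"
      unfolding M'_def using \<rho> r' C
      by (intro mult_left_mono Max_nterm_le_maxmod[OF _ adm F z0]) auto
    also have "\<dots> \<le> p1 * M'"
    proof -
      have "0 \<le> M'" unfolding M'_def using r' beta by (intro maxmod_divL_nonneg[OF _ adm F z0]) auto
      then show ?thesis
        unfolding p1_def using mult_right_mono[OF max.cobounded2[of "C / \<rho> ^ N" 1]] by simp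
    qed
    finally show ?thesis unfolding M'_def .
  qed
  moreover have "1 \<le> p1" by (simp add: p1_def)
  ultimately show ?thesis using that by blast
qed

end

theorem theorem5:
  fixes \<beta> :: real
    and l1 l2 :: "complex \<times> complex \<Rightarrow> real"
    and F :: "complex \<times> complex \<Rightarrow> complex"
  assumes "\<beta> > 1"
    and "Q2 \<beta> l1 l2"
    and "analytic2 F"
  shows "bounded_L_index F l1 l2 \<longleftrightarrow>
    (\<forall>r1' r2' r1'' r2''. 0 < r1' \<and> r1' < r1'' \<and> r1'' \<le> \<beta> \<and>
                         0 < r2' \<and> r2' < r2'' \<and> r2'' \<le> \<beta> \<longrightarrow>
       (\<exists>p1::real. p1 \<ge> 1 \<and> (\<forall>z0 \<in> bidisc.
          maxmod (divL (r1'', r2'') l1 l2 z0) z0 F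
            \<le> p1 * maxmod (divL (r1', r2') l1 l2 z0) z0 F)))"
    (is "_ \<longleftrightarrow> ?ratio")
proof
  assume "bounded_L_index F l1 l2"
  then obtain N where index: "\<And>z k. z \<in> bidisc \<Longrightarrow> nterm F l1 l2 z k \<le> Max (nterm F l1 l2 z ` triangle N)"
    unfolding bounded_L_index_triangle_iff by fast
  show ?ratio
  proof (intro allI impI)
    fix r1' r2' r1'' r2'' :: real
    assume "0 < r1' \<and> r1' < r1'' \<and> r1'' \<le> \<beta> \<and> 0 < r2' \<and> r2' < r2'' \<and> r2'' \<le> \<beta>"
    then obtain p1 where "1 \<le> p1" "\<And>z0. z0 \<in> bidisc \<Longrightarrow>
        maxmod (divL (r1'', r2'') l1 l2 z0) z0 F \<le> p1 * maxmod (divL (r1', r2') l1 l2 z0) z0 F"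
      using bounded_L_index_imp_maxmod_ratio[OF assms index, of r1' r2' r1'' r2''] by auto
    then show "\<exists>p1. 1 \<le> p1 \<and> (\<forall>z0 \<in> bidisc.
        maxmod (divL (r1'', r2'') l1 l2 z0) z0 F \<le> p1 * maxmod (divL (r1', r2') l1 l2 z0) z0 F)"
      by blast
  qed
next
  assume ?ratio
  then obtain P where P: "1 \<le> P" and ratio: "\<forall>z0 \<in> bidisc.
      maxmod (divL (\<beta>, \<beta>) l1 l2 z0) z0 F \<le> P * maxmod (divL (1, 1) l1 l2 z0) z0 F"
    using assms(1) by (elim allE[of _ 1] allE[of _ 1] allE[of _ \<beta>] allE[of _ \<beta>]) auto
  show "bounded_L_index F l1 l2"
    by (rule maxmod_ratio_imp_bounded_L_index[OF assms(1) Q2_admissible_L[OF assms(2)] assms(3)])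
      (use P ratio in auto)
qed

end
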